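(* Let $D\colon\mathbf{I}\to\mathbf{CompOrd}$ be a codirected diagram, let $(f_i\colon X\to D(i))_{i\in\mathbf{I}}$ be a limit cone for $D$ in $\mathbf{CompOrd}$, and let $K,L$ be closed subsets of $X$. Then: (1) $\uparrow K\subseteq\uparrow L$ iff $\uparrow f_i[K]\subseteq\uparrow f_i[L]$ for all $i\in\mathbf{I}$; (2) $\downarrow K\subseteq\downarrow L$ iff $\downarrow f_i[K]\subseteq\downarrow f_i[L]$ for all $i\in\mathbf{I}$; (3) $\updownarrow K\le_{\mathrm{EM}}\updownarrow L$ iff $\updownarrow f_i[K]\le_{\mathrm{EM}}\updownarrow f_i[L]$ for all $i\in\mathbf{I}$.
   Context: $\mathbf{CompOrd}$ is the category of compact ordered spaces (compact Hausdorff spaces with a partial order closed in $X\times X$) and continuous order-preserving maps. For a subset $Y$ of a poset, $\uparrow Y$, $\downarrow Y$ denote up- and down-closure and $\updownarrow Y=\uparrow Y\cap\downarrow Y$. For subsets $K,L$ of a poset, the Egli–Milner order is $K\le_{\mathrm{EM}}L$ iff $\uparrow L\subseteq\uparrow K$ and $\downarrow K\subseteq\downarrow L$. A codirected diagram is a diagram indexed by a small cofiltered preorder. *)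

theory Defs
  imports "HOL-Analysis.Analysis"
begin

definition comp_ord :: "'a topology \<Rightarrow> ('a \<Rightarrow> 'a \<Rightarrow> bool) \<Rightarrow> bool" where
  "comp_ord T R \<longleftrightarrow>
     compact_space T \<and> Hausdorff_space T \<and>
     (\<forall>x\<in>topspace T. R x x) \<and>
     (\<forall>x\<in>topspace T. \<forall>y\<in>topspace T. R x y \<and> R y x \<longrightarrow> x = y) \<and>
     (\<forall>x\<in>topspace T. \<forall>y\<in>topspace T. \<forall>z\<in>topspace T. R x y \<and> R y z \<longrightarrow> R x z) \<and>
     closedin (prod_topology T T) {(x, y). x \<in> topspace T \<and> y \<in> topspace T \<and> R x y}"

definition comp_ord_map ::
  "'a topology \<Rightarrow> ('a \<Rightarrow> 'a \<Rightarrow> bool) \<Rightarrow> 'b topology \<Rightarrow> ('b \<Rightarrow> 'b \<Rightarrow> bool) \<Rightarrow> ('a \<Rightarrow> 'b) \<Rightarrow> bool" where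
  "comp_ord_map T R S Q f \<longleftrightarrow> continuous_map T S f \<and>
     (\<forall>x\<in>topspace T. \<forall>y\<in>topspace T. R x y \<longrightarrow> Q (f x) (f y))"

definition up_cl :: "'a set \<Rightarrow> ('a \<Rightarrow> 'a \<Rightarrow> bool) \<Rightarrow> 'a set \<Rightarrow> 'a set" where
  "up_cl C R Y = {z \<in> C. \<exists>y\<in>Y. R y z}"

definition down_cl :: "'a set \<Rightarrow> ('a \<Rightarrow> 'a \<Rightarrow> bool) \<Rightarrow> 'a set \<Rightarrow> 'a set" where
  "down_cl C R Y = {z \<in> C. \<exists>y\<in>Y. R z y}"

definition updown_cl :: "'a set \<Rightarrow> ('a \<Rightarrow> 'a \<Rightarrow> bool) \<Rightarrow> 'a set \<Rightarrow> 'a set" where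
  "updown_cl C R Y = up_cl C R Y \<inter> down_cl C R Y"

definition em_le :: "'a set \<Rightarrow> ('a \<Rightarrow> 'a \<Rightarrow> bool) \<Rightarrow> 'a set \<Rightarrow> 'a set \<Rightarrow> bool" where
  "em_le C R K L \<longleftrightarrow> up_cl C R L \<subseteq> up_cl C R K \<and> down_cl C R K \<subseteq> down_cl C R L"

definition cofiltered_preorder :: "'i set \<Rightarrow> ('i \<Rightarrow> 'i \<Rightarrow> bool) \<Rightarrow> bool" where
  "cofiltered_preorder I le \<longleftrightarrow>
     (\<forall>i\<in>I. le i i) \<and>
     (\<forall>i\<in>I. \<forall>j\<in>I. \<forall>k\<in>I. le i j \<and> le j k \<longrightarrow> le i k) \<and>
     I \<noteq> {} \<and> (\<forall>i\<in>I. \<forall>j\<in>I. \<exists>k\<in>I. le k i \<and> le k j)"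

definition comp_ord_diagram ::
  "'i set \<Rightarrow> ('i \<Rightarrow> 'i \<Rightarrow> bool) \<Rightarrow> ('i \<Rightarrow> 'b topology) \<Rightarrow> ('i \<Rightarrow> 'b \<Rightarrow> 'b \<Rightarrow> bool)
     \<Rightarrow> ('i \<Rightarrow> 'i \<Rightarrow> 'b \<Rightarrow> 'b) \<Rightarrow> bool" where
  "comp_ord_diagram I le T R d \<longleftrightarrow>
     (\<forall>i\<in>I. comp_ord (T i) (R i)) \<and>
     (\<forall>i\<in>I. \<forall>j\<in>I. le i j \<longrightarrow> comp_ord_map (T i) (R i) (T j) (R j) (d i j)) \<and>
     (\<forall>i\<in>I. \<forall>x\<in>topspace (T i). d i i x = x) \<and>
     (\<forall>i\<in>I. \<forall>j\<in>I. \<forall>k\<in>I. le i j \<and> le j k \<longrightarrow>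
        (\<forall>x\<in>topspace (T i). d j k (d i j x) = d i k x))"

definition comp_ord_cone ::
  "'i set \<Rightarrow> ('i \<Rightarrow> 'i \<Rightarrow> bool) \<Rightarrow> ('i \<Rightarrow> 'b topology) \<Rightarrow> ('i \<Rightarrow> 'b \<Rightarrow> 'b \<Rightarrow> bool)
     \<Rightarrow> ('i \<Rightarrow> 'i \<Rightarrow> 'b \<Rightarrow> 'b) \<Rightarrow> 'a topology \<Rightarrow> ('a \<Rightarrow> 'a \<Rightarrow> bool) \<Rightarrow> ('i \<Rightarrow> 'a \<Rightarrow> 'b) \<Rightarrow> bool" where
  "comp_ord_cone I le T R d TX RX f \<longleftrightarrow>
     comp_ord TX RX \<and>
     (\<forall>i\<in>I. comp_ord_map TX RX (T i) (R i) (f i)) \<and>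
     (\<forall>i\<in>I. \<forall>j\<in>I. le i j \<longrightarrow> (\<forall>x\<in>topspace TX. d i j (f i x) = f j x))"

definition comp_ord_limit_cone ::
  "'i set \<Rightarrow> ('i \<Rightarrow> 'i \<Rightarrow> bool) \<Rightarrow> ('i \<Rightarrow> 'b topology) \<Rightarrow> ('i \<Rightarrow> 'b \<Rightarrow> 'b \<Rightarrow> bool)
     \<Rightarrow> ('i \<Rightarrow> 'i \<Rightarrow> 'b \<Rightarrow> 'b) \<Rightarrow> 'a topology \<Rightarrow> ('a \<Rightarrow> 'a \<Rightarrow> bool) \<Rightarrow> ('i \<Rightarrow> 'a \<Rightarrow> 'b) \<Rightarrow> bool" where
  "comp_ord_limit_cone I le T R d TX RX f \<longleftrightarrow>
     comp_ord_cone I le T R d TX RX f \<and>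
     (\<forall>(TY::'a topology) RY g. comp_ord_cone I le T R d TY RY g \<longrightarrow>
        (\<exists>h. comp_ord_map TY RY TX RX h \<and> (\<forall>i\<in>I. \<forall>y\<in>topspace TY. f i (h y) = g i y) \<and>
           (\<forall>h'. comp_ord_map TY RY TX RX h' \<and> (\<forall>i\<in>I. \<forall>y\<in>topspace TY. f i (h' y) = g i y)
                 \<longrightarrow> (\<forall>y\<in>topspace TY. h' y = h y))))"

end

theory Submission
  imports Defs
begin

text \<open>A limit cone in CompOrd reflects the order: testing the universal property against
one- and two-point discrete cones shows that the projections are jointly injective and
jointly order-reflecting. Given this, the nontrivial inclusion of (1) is a compactness
argument: if every projection of z lies above a projection of L, then the closed sets
{l \<in> L. f i l \<le> f i z} form a codirected family of nonempty closed sets, so some l lies in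
all of them and hence below z. Part (2) is (1) for the opposite orders, and (3) reduces to
(1) and (2) because a set and its convex closure have the same up- and down-closure.\<close>

lemma cofiltered_preorder_finite_lower_bound:
  assumes cof: "cofiltered_preorder I le" and "finite J" "J \<subseteq> I"
  shows "\<exists>k\<in>I. \<forall>j\<in>J. le k j"
  using assms(2,3)
proof (induction J rule: finite_induct)
  case empty
  show ?case using cof unfolding cofiltered_preorder_def by blast
next
  case (insert j J)
  then obtain k where k: "k \<in> I" "\<forall>i\<in>J. le k i" by blast
  obtain m where m: "m \<in> I" "le m k" "le m j"
    using cof k(1) insert.prems unfolding cofiltered_preorder_def by blast
  have "le m i" if "i \<in> J" for i
  proof -
    have "i \<in> I" "le k i" using that k insert.prems by auto
    then show ?thesis
      using cof m k(1) unfolding cofiltered_preorder_def by blast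
  qed
  then show ?case using m by blast
qed

lemma compact_space_Inter_cofiltered_nonempty:
  assumes "compact_space X" and cof: "cofiltered_preorder I le"
    and closed: "\<And>i. i \<in> I \<Longrightarrow> closedin X (C i)"
    and nonempty: "\<And>i. i \<in> I \<Longrightarrow> C i \<noteq> {}"
    and mono: "\<And>i j. i \<in> I \<Longrightarrow> j \<in> I \<Longrightarrow> le i j \<Longrightarrow> C i \<subseteq> C j"
  shows "(\<Inter>i\<in>I. C i) \<noteq> {}"
proof -
  have "\<Inter>\<F> \<noteq> {}" if \<F>: "finite \<F>" "\<F> \<subseteq> C ` I" for \<F>
  proof -
    obtain J where J: "J \<subseteq> I" "finite J" "\<F> = C ` J"
      using finite_subset_image[OF \<F>] by blast
    then obtain k where k: "k \<in> I" "\<forall>j\<in>J. le k j"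
      using cofiltered_preorder_finite_lower_bound[OF cof] by blast
    have "C k \<subseteq> C j" if "j \<in> J" for j
      using mono k J(1) that by blast
    then have "C k \<subseteq> \<Inter>\<F>"
      using J(3) by blast
    then show ?thesis
      using nonempty[OF k(1)] by blast
  qed
  moreover have "\<forall>U\<in>C ` I. closedin X U"
    using closed by blast
  ultimately show ?thesis
    using compact_space_fip[THEN iffD1, OF assms(1), rule_format, of "C ` I"] by blast
qed

lemma comp_ord_reflD: "comp_ord T R \<Longrightarrow> x \<in> topspace T \<Longrightarrow> R x x"
  unfolding comp_ord_def by blast

lemma comp_ord_transD:
  "comp_ord T R \<Longrightarrow> R x y \<Longrightarrow> R y z \<Longrightarrow> x \<in> topspace T \<Longrightarrow> y \<in> topspace T \<Longrightarrow> z \<in> topspace T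
    \<Longrightarrow> R x z"
  unfolding comp_ord_def by blast

lemma comp_ord_closedin_le:
  "comp_ord T R \<Longrightarrow> closedin (prod_topology T T) {(x, y). x \<in> topspace T \<and> y \<in> topspace T \<and> R x y}"
  unfolding comp_ord_def by blast

lemma comp_ord_diagram_comp_ord:
  assumes "comp_ord_diagram I le T R d" "i \<in> I"
  shows "comp_ord (T i) (R i)"
  using assms(1) unfolding comp_ord_diagram_def using assms(2) by (elim conjE) (rule bspec)

lemma comp_ord_diagram_mono:
  assumes "comp_ord_diagram I le T R d" "i \<in> I" "j \<in> I" "le i j"
    and "x \<in> topspace (T i)" "y \<in> topspace (T i)" "R i x y"
  shows "R j (d i j x) (d i j y)"
proof -
  have "\<forall>i\<in>I. \<forall>j\<in>I. le i j \<longrightarrow> comp_ord_map (T i) (R i) (T j) (R j) (d i j)"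
    using assms(1) unfolding comp_ord_diagram_def by (rule conjunct1[OF conjunct2])
  then have "comp_ord_map (T i) (R i) (T j) (R j) (d i j)"
    using assms(2-4) by blast
  then show ?thesis
    using assms(5-7) unfolding comp_ord_map_def by blast
qed

lemma comp_ord_cone_comp_ord: "comp_ord_cone I le T R d TX RX f \<Longrightarrow> comp_ord TX RX"
  unfolding comp_ord_cone_def by (rule conjunct1)

lemma comp_ord_cone_map:
  assumes "comp_ord_cone I le T R d TX RX f" "i \<in> I"
  shows "comp_ord_map TX RX (T i) (R i) (f i)"
proof -
  have "\<forall>i\<in>I. comp_ord_map TX RX (T i) (R i) (f i)"
    using assms(1) unfolding comp_ord_cone_def by (rule conjunct1[OF conjunct2])
  then show ?thesis using assms(2) by (rule bspec)
qed

lemma comp_ord_cone_continuous: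
  "comp_ord_cone I le T R d TX RX f \<Longrightarrow> i \<in> I \<Longrightarrow> continuous_map TX (T i) (f i)"
  using comp_ord_cone_map unfolding comp_ord_map_def by (rule conjunct1)

lemma comp_ord_cone_in_topspace:
  "comp_ord_cone I le T R d TX RX f \<Longrightarrow> i \<in> I \<Longrightarrow> x \<in> topspace TX \<Longrightarrow> f i x \<in> topspace (T i)"
  using comp_ord_cone_continuous continuous_map_funspace by (metis PiE)

lemma comp_ord_cone_mono:
  assumes "comp_ord_cone I le T R d TX RX f" "i \<in> I"
    and "x \<in> topspace TX" "y \<in> topspace TX" "RX x y"
  shows "R i (f i x) (f i y)"
  using comp_ord_cone_map[OF assms(1,2)] assms(3-5) unfolding comp_ord_map_def by blast

lemma comp_ord_cone_commute:
  assumes "comp_ord_cone I le T R d TX RX f" "i \<in> I" "j \<in> I" "le i j" "x \<in> topspace TX"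
  shows "d i j (f i x) = f j x"
proof -
  have "\<forall>i\<in>I. \<forall>j\<in>I. le i j \<longrightarrow> (\<forall>x\<in>topspace TX. d i j (f i x) = f j x)"
    using assms(1) unfolding comp_ord_cone_def by (rule conjunct2[OF conjunct2])
  then have "le i j \<longrightarrow> (\<forall>x\<in>topspace TX. d i j (f i x) = f j x)"
    using assms(2,3) by blast
  then show ?thesis using assms(4,5) by blast
qed

lemma comp_ord_conversep:
  assumes "comp_ord T R"
  shows "comp_ord T R\<inverse>\<inverse>"
proof -
  let ?G = "\<lambda>Q. {(x, y). x \<in> topspace T \<and> y \<in> topspace T \<and> Q x y}"
  have "?G R\<inverse>\<inverse> = (\<lambda>(x, y). (y, x)) ` ?G R"
    by (auto simp: image_iff)
  moreover have "closedin (prod_topology T T) ((\<lambda>(x, y). (y, x)) ` ?G R) \<longleftrightarrow>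
      closedin (prod_topology T T) (?G R)"
    by (rule homeomorphic_map_closedness[OF homeomorphic_map_swap]) auto
  ultimately have "closedin (prod_topology T T) (?G R\<inverse>\<inverse>)"
    using comp_ord_closedin_le[OF assms] by simp
  then show ?thesis
    using assms unfolding comp_ord_def by blast
qed

lemma comp_ord_map_conversep:
  "comp_ord_map T R S Q f \<Longrightarrow> comp_ord_map T R\<inverse>\<inverse> S Q\<inverse>\<inverse> f"
  unfolding comp_ord_map_def by auto

lemma comp_ord_diagram_conversep:
  "comp_ord_diagram I le T R d \<Longrightarrow> comp_ord_diagram I le T (\<lambda>i. (R i)\<inverse>\<inverse>) d"
  unfolding comp_ord_diagram_def by (blast intro: comp_ord_conversep comp_ord_map_conversep)

lemma comp_ord_cone_conversep:
  "comp_ord_cone I le T R d TX RX f \<Longrightarrow> comp_ord_cone I le T (\<lambda>i. (R i)\<inverse>\<inverse>) d TX RX\<inverse>\<inverse> f"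
  unfolding comp_ord_cone_def by (blast intro: comp_ord_conversep comp_ord_map_conversep)

lemma down_cl_eq_up_cl_conversep: "down_cl C R Y = up_cl C R\<inverse>\<inverse> Y"
  unfolding down_cl_def up_cl_def by simp

lemma comp_ord_discrete_topology:
  assumes "finite S" "\<forall>x\<in>S. Q x x" "\<forall>x\<in>S. \<forall>y\<in>S. Q x y \<and> Q y x \<longrightarrow> x = y"
    "\<forall>x\<in>S. \<forall>y\<in>S. \<forall>z\<in>S. Q x y \<and> Q y z \<longrightarrow> Q x z"
  shows "comp_ord (discrete_topology S) Q"
proof -
  have graph: "{(x, y). x \<in> S \<and> y \<in> S \<and> Q x y} \<subseteq> S \<times> S"
    by blast
  then have "finite {(x, y). x \<in> S \<and> y \<in> S \<and> Q x y}"
    using assms(1) finite_subset by blast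
  then have "closedin (prod_topology (discrete_topology S) (discrete_topology S))
      {(x, y). x \<in> S \<and> y \<in> S \<and> Q x y}"
    using graph by (intro closedin_Hausdorff_finite) (simp_all add: Hausdorff_space_prod_topology)
  moreover have "compact_space (discrete_topology S)"
    using assms(1) by (simp add: compact_space_discrete_topology)
  ultimately show ?thesis
    unfolding comp_ord_def topspace_discrete_topology
    using assms(2-4) by (intro conjI Hausdorff_space_discrete_topology) assumption+
qed

lemma comp_ord_cone_restrict_discrete:
  assumes cone: "comp_ord_cone I le T R d TX RX f"
    and S: "S \<subseteq> topspace TX" "finite S"
    and order: "\<forall>x\<in>S. Q x x" "\<forall>x\<in>S. \<forall>y\<in>S. Q x y \<and> Q y x \<longrightarrow> x = y"
      "\<forall>x\<in>S. \<forall>y\<in>S. \<forall>z\<in>S. Q x y \<and> Q y z \<longrightarrow> Q x z"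
    and mono: "\<And>i u v. i \<in> I \<Longrightarrow> u \<in> S \<Longrightarrow> v \<in> S \<Longrightarrow> Q u v \<Longrightarrow> R i (f i u) (f i v)"
  shows "comp_ord_cone I le T R d (discrete_topology S) Q f"
  unfolding comp_ord_cone_def
proof (intro conjI ballI)
  show "comp_ord (discrete_topology S) Q"
    using comp_ord_discrete_topology[OF S(2) order] .
next
  fix i assume i: "i \<in> I"
  have "f i \<in> S \<rightarrow> topspace (T i)"
    using comp_ord_cone_in_topspace[OF cone i] S(1) by blast
  then show "comp_ord_map (discrete_topology S) Q (T i) (R i) (f i)"
    using mono[OF i] unfolding comp_ord_map_def continuous_map_from_discrete_topology
      topspace_discrete_topology by blast
next
  fix i j assume "i \<in> I" "j \<in> I"
  then show "le i j \<longrightarrow> (\<forall>x\<in>topspace (discrete_topology S). d i j (f i x) = f j x)"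
    using comp_ord_cone_commute[OF cone] S(1) by auto
qed

lemma comp_ord_cone_refl:
  assumes "comp_ord_diagram I le T R d" "comp_ord_cone I le T R d TX RX f"
    and "i \<in> I" "x \<in> topspace TX"
  shows "R i (f i x) (f i x)"
  using comp_ord_reflD[OF comp_ord_diagram_comp_ord[OF assms(1,3)]
      comp_ord_cone_in_topspace[OF assms(2-4)]] .

lemma comp_ord_limit_cone_cone:
  "comp_ord_limit_cone I le T R d TX RX f \<Longrightarrow> comp_ord_cone I le T R d TX RX f"
  unfolding comp_ord_limit_cone_def by (rule conjunct1)

lemma comp_ord_limit_cone_universal:
  fixes TX TY :: "'a topology"
  assumes "comp_ord_limit_cone I le T R d TX RX f" "comp_ord_cone I le T R d TY RY g"
  shows "\<exists>h. comp_ord_map TY RY TX RX h \<and> (\<forall>i\<in>I. \<forall>y\<in>topspace TY. f i (h y) = g i y) \<and>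
    (\<forall>h'. comp_ord_map TY RY TX RX h' \<and> (\<forall>i\<in>I. \<forall>y\<in>topspace TY. f i (h' y) = g i y)
      \<longrightarrow> (\<forall>y\<in>topspace TY. h' y = h y))"
  using assms(1)[unfolded comp_ord_limit_cone_def, THEN conjunct2, rule_format, OF assms(2)] .

lemma comp_ord_limit_cone_factor:
  fixes TX TY :: "'a topology"
  assumes "comp_ord_limit_cone I le T R d TX RX f" "comp_ord_cone I le T R d TY RY g"
  obtains h where "comp_ord_map TY RY TX RX h" "\<forall>i\<in>I. \<forall>y\<in>topspace TY. f i (h y) = g i y"
  using comp_ord_limit_cone_universal[OF assms] by blast

lemma comp_ord_limit_cone_factor_unique:
  fixes TX TY :: "'a topology"
  assumes "comp_ord_limit_cone I le T R d TX RX f" "comp_ord_cone I le T R d TY RY g"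
    and "comp_ord_map TY RY TX RX h\<^sub>1" "\<forall>i\<in>I. \<forall>y\<in>topspace TY. f i (h\<^sub>1 y) = g i y"
    and "comp_ord_map TY RY TX RX h\<^sub>2" "\<forall>i\<in>I. \<forall>y\<in>topspace TY. f i (h\<^sub>2 y) = g i y"
    and "y \<in> topspace TY"
  shows "h\<^sub>1 y = h\<^sub>2 y"
proof -
  obtain h where "\<forall>h'. comp_ord_map TY RY TX RX h' \<and> (\<forall>i\<in>I. \<forall>y\<in>topspace TY. f i (h' y) = g i y)
      \<longrightarrow> (\<forall>y\<in>topspace TY. h' y = h y)"
    using comp_ord_limit_cone_universal[OF assms(1,2)] by blast
  then have "h\<^sub>1 y = h y" "h\<^sub>2 y = h y"
    using assms(3-7) by blast+
  then show ?thesis by simp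
qed

lemma comp_ord_limit_cone_inj:
  assumes diag: "comp_ord_diagram I le T R d" and lim: "comp_ord_limit_cone I le T R d TX RX f"
    and a: "a \<in> topspace TX" and b: "b \<in> topspace TX" and eq: "\<forall>i\<in>I. f i a = f i b"
  shows "a = b"
proof -
  note cone = comp_ord_limit_cone_cone[OF lim]
  have point_cone: "comp_ord_cone I le T R d (discrete_topology {a}) (=) f"
    using a comp_ord_cone_refl[OF diag cone] by (intro comp_ord_cone_restrict_discrete[OF cone]) auto
  have const: "comp_ord_map (discrete_topology {a}) (=) TX RX (\<lambda>_. c)" if "c \<in> topspace TX" for c
    using that comp_ord_reflD[OF comp_ord_cone_comp_ord[OF cone]]
    unfolding comp_ord_map_def by simp
  have "(\<lambda>_. a) a = (\<lambda>_. b) a"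
    by (rule comp_ord_limit_cone_factor_unique[OF lim point_cone const[OF a] _ const[OF b]])
      (use eq in auto)
  then show ?thesis by simp
qed

lemma comp_ord_limit_cone_reflects_order:
  assumes diag: "comp_ord_diagram I le T R d" and lim: "comp_ord_limit_cone I le T R d TX RX f"
    and x: "x \<in> topspace TX" and y: "y \<in> topspace TX" and le_xy: "\<forall>i\<in>I. R i (f i x) (f i y)"
  shows "RX x y"
proof -
  note cone = comp_ord_limit_cone_cone[OF lim]
  define Q where "Q u v \<longleftrightarrow> u = v \<or> (u = x \<and> v = y)" for u v
  have "comp_ord_cone I le T R d (discrete_topology {x, y}) Q f"
  proof (rule comp_ord_cone_restrict_discrete[OF cone])
    show "{x, y} \<subseteq> topspace TX" "finite {x, y}"
      using x y by simp_all
    show "\<forall>u\<in>{x, y}. Q u u"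
      "\<forall>u\<in>{x, y}. \<forall>v\<in>{x, y}. Q u v \<and> Q v u \<longrightarrow> u = v"
      "\<forall>u\<in>{x, y}. \<forall>v\<in>{x, y}. \<forall>w\<in>{x, y}. Q u v \<and> Q v w \<longrightarrow> Q u w"
      unfolding Q_def by blast+
    show "R i (f i u) (f i v)" if "i \<in> I" "u \<in> {x, y}" "v \<in> {x, y}" "Q u v" for i u v
      using that x y le_xy comp_ord_cone_refl[OF diag cone] unfolding Q_def by blast
  qed
  then obtain h where h: "comp_ord_map (discrete_topology {x, y}) Q TX RX h"
      "\<forall>i\<in>I. \<forall>u\<in>topspace (discrete_topology {x, y}). f i (h u) = f i u"
    by (rule comp_ord_limit_cone_factor[OF lim])
  have "h u = u" if u: "u \<in> {x, y}" for u
  proof (rule comp_ord_limit_cone_inj[OF diag lim])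
    show "h u \<in> topspace TX"
      using continuous_map_funspace[OF h(1)[unfolded comp_ord_map_def, THEN conjunct1]] u by auto
    show "u \<in> topspace TX" using u x y by blast
    show "\<forall>i\<in>I. f i (h u) = f i u" using h(2) u by auto
  qed
  moreover have "RX (h x) (h y)"
    using h(1) unfolding comp_ord_map_def topspace_discrete_topology Q_def by blast
  ultimately show ?thesis by simp
qed

lemma closedin_below_preimage:
  assumes "comp_ord S Q" "continuous_map X S g" "closedin X L" "c \<in> topspace S"
  shows "closedin X {l \<in> L. Q (g l) c}"
proof -
  have "continuous_map X (prod_topology S S) (\<lambda>l. (g l, c))"
    using assms(2,4) by (simp add: continuous_map_pairedI)
  then have "closedin X {l \<in> topspace X. (g l, c) \<in> {(u, v). u \<in> topspace S \<and> v \<in> topspace S \<and> Q u v}}"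
    using closedin_continuous_map_preimage comp_ord_closedin_le[OF assms(1)] by blast
  moreover have "{l \<in> L. Q (g l) c}
      = L \<inter> {l \<in> topspace X. (g l, c) \<in> {(u, v). u \<in> topspace S \<and> v \<in> topspace S \<and> Q u v}}"
    using closedin_subset[OF assms(3)] continuous_map_funspace[OF assms(2)] assms(4) by auto
  ultimately show ?thesis
    using assms(3) by auto
qed

lemma up_cl_image_subset:
  assumes X: "comp_ord TX RX" and S: "comp_ord S Q" and g: "comp_ord_map TX RX S Q g"
    and KL: "K \<subseteq> topspace TX" "L \<subseteq> topspace TX"
    and up: "up_cl (topspace TX) RX K \<subseteq> up_cl (topspace TX) RX L"
  shows "up_cl (topspace S) Q (g ` K) \<subseteq> up_cl (topspace S) Q (g ` L)"
proof
  fix z assume "z \<in> up_cl (topspace S) Q (g ` K)"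
  then obtain k where k: "k \<in> K" "Q (g k) z" and z: "z \<in> topspace S"
    unfolding up_cl_def by blast
  have "k \<in> up_cl (topspace TX) RX K"
    using k KL comp_ord_reflD[OF X] unfolding up_cl_def by blast
  then obtain l where l: "l \<in> L" "RX l k"
    using up unfolding up_cl_def by blast
  have g_in: "g x \<in> topspace S" if "x \<in> topspace TX" for x
    using g that continuous_map_funspace unfolding comp_ord_map_def by fastforce
  have "Q (g l) (g k)"
    using g l k KL unfolding comp_ord_map_def by blast
  then have "Q (g l) z"
    using comp_ord_transD[OF S _ k(2)] g_in l(1) k(1) KL z by blast
  then show "z \<in> up_cl (topspace S) Q (g ` L)"
    using l(1) z unfolding up_cl_def by blast
qed

lemma up_cl_subset_of_projections:
  assumes cof: "cofiltered_preorder I le" and diag: "comp_ord_diagram I le T R d"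
    and cone: "comp_ord_cone I le T R d TX RX f"
    and reflect: "\<forall>x\<in>topspace TX. \<forall>y\<in>topspace TX. (\<forall>i\<in>I. R i (f i x) (f i y)) \<longrightarrow> RX x y"
    and K: "K \<subseteq> topspace TX" and L: "closedin TX L"
    and proj: "\<forall>i\<in>I. up_cl (topspace (T i)) (R i) (f i ` K) \<subseteq> up_cl (topspace (T i)) (R i) (f i ` L)"
  shows "up_cl (topspace TX) RX K \<subseteq> up_cl (topspace TX) RX L"
proof
  have L_sub: "L \<subseteq> topspace TX" using L closedin_subset by blast
  note f_in = comp_ord_cone_in_topspace[OF cone]
  fix z assume "z \<in> up_cl (topspace TX) RX K"
  then obtain k where k: "k \<in> K" "RX k z" and z: "z \<in> topspace TX"
    unfolding up_cl_def by blast
  define C where "C i = {l \<in> L. R i (f i l) (f i z)}" for i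
  have "(\<Inter>i\<in>I. C i) \<noteq> {}"
  proof (rule compact_space_Inter_cofiltered_nonempty[OF _ cof])
    show "compact_space TX"
      using comp_ord_cone_comp_ord[OF cone] unfolding comp_ord_def by (rule conjunct1)
  next
    fix i assume i: "i \<in> I"
    show "closedin TX (C i)"
      unfolding C_def using comp_ord_diagram_comp_ord[OF diag i] comp_ord_cone_continuous[OF cone i] L
      by (rule closedin_below_preimage) (rule f_in[OF i z])
    have "f i z \<in> up_cl (topspace (T i)) (R i) (f i ` K)"
      using k K z comp_ord_cone_mono[OF cone i] f_in[OF i] unfolding up_cl_def by blast
    then show "C i \<noteq> {}"
      using proj i unfolding up_cl_def C_def by blast
  next
    fix i j assume ij: "i \<in> I" "j \<in> I" "le i j"
    show "C i \<subseteq> C j"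
    proof
      fix l assume "l \<in> C i"
      then have l: "l \<in> L" "R i (f i l) (f i z)" unfolding C_def by blast+
      then have "R j (d i j (f i l)) (d i j (f i z))"
        using comp_ord_diagram_mono[OF diag ij] f_in[OF ij(1)] L_sub z by blast
      then show "l \<in> C j"
        using l(1) comp_ord_cone_commute[OF cone ij] L_sub z unfolding C_def by auto
    qed
  qed
  moreover have "I \<noteq> {}" using cof unfolding cofiltered_preorder_def by blast
  ultimately obtain l where "l \<in> L" "\<forall>i\<in>I. R i (f i l) (f i z)"
    unfolding C_def by blast
  then show "z \<in> up_cl (topspace TX) RX L"
    using reflect L_sub z unfolding up_cl_def by blast
qed

lemma up_cl_subset_iff_projections:
  assumes cof: "cofiltered_preorder I le" and diag: "comp_ord_diagram I le T R d"
    and cone: "comp_ord_cone I le T R d TX RX f"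
    and reflect: "\<forall>x\<in>topspace TX. \<forall>y\<in>topspace TX. (\<forall>i\<in>I. R i (f i x) (f i y)) \<longrightarrow> RX x y"
    and K: "K \<subseteq> topspace TX" and L: "closedin TX L"
  shows "up_cl (topspace TX) RX K \<subseteq> up_cl (topspace TX) RX L \<longleftrightarrow>
      (\<forall>i\<in>I. up_cl (topspace (T i)) (R i) (f i ` K) \<subseteq> up_cl (topspace (T i)) (R i) (f i ` L))"
  using up_cl_subset_of_projections[OF cof diag cone reflect K L]
    up_cl_image_subset[OF comp_ord_cone_comp_ord[OF cone] comp_ord_diagram_comp_ord[OF diag]
      comp_ord_cone_map[OF cone] K closedin_subset[OF L]]
  by blast

lemma up_cl_updown_cl:
  assumes "Y \<subseteq> C" "\<forall>x\<in>C. R x x" "\<forall>x\<in>C. \<forall>y\<in>C. \<forall>z\<in>C. R x y \<and> R y z \<longrightarrow> R x z"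
  shows "up_cl C R (updown_cl C R Y) = up_cl C R Y"
  using assms unfolding updown_cl_def up_cl_def down_cl_def by blast

lemma down_cl_updown_cl:
  assumes "Y \<subseteq> C" "\<forall>x\<in>C. R x x" "\<forall>x\<in>C. \<forall>y\<in>C. \<forall>z\<in>C. R x y \<and> R y z \<longrightarrow> R x z"
  shows "down_cl C R (updown_cl C R Y) = down_cl C R Y"
  using assms unfolding updown_cl_def up_cl_def down_cl_def by blast

lemma em_le_updown_cl_iff:
  assumes "K \<subseteq> topspace T" "L \<subseteq> topspace T" "comp_ord T R"
  shows "em_le (topspace T) R (updown_cl (topspace T) R K) (updown_cl (topspace T) R L) \<longleftrightarrow>
      up_cl (topspace T) R L \<subseteq> up_cl (topspace T) R K \<and> down_cl (topspace T) R K \<subseteq> down_cl (topspace T) R L"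
proof -
  have refl: "\<forall>x\<in>topspace T. R x x"
    and trans: "\<forall>x\<in>topspace T. \<forall>y\<in>topspace T. \<forall>z\<in>topspace T. R x y \<and> R y z \<longrightarrow> R x z"
    using assms(3) unfolding comp_ord_def by blast+
  show ?thesis
    unfolding em_le_def up_cl_updown_cl[OF assms(1) refl trans] up_cl_updown_cl[OF assms(2) refl trans]
      down_cl_updown_cl[OF assms(1) refl trans] down_cl_updown_cl[OF assms(2) refl trans] ..
qed

theorem lemma3p11:
  fixes I :: "'i set" and le :: "'i \<Rightarrow> 'i \<Rightarrow> bool"
    and T :: "'i \<Rightarrow> 'b topology" and R :: "'i \<Rightarrow> 'b \<Rightarrow> 'b \<Rightarrow> bool"
    and d :: "'i \<Rightarrow> 'i \<Rightarrow> 'b \<Rightarrow> 'b"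
    and TX :: "'a topology" and RX :: "'a \<Rightarrow> 'a \<Rightarrow> bool" and f :: "'i \<Rightarrow> 'a \<Rightarrow> 'b"
    and K L :: "'a set"
  assumes "cofiltered_preorder I le"
    and "comp_ord_diagram I le T R d"
    and "comp_ord_limit_cone I le T R d TX RX f"
    and "closedin TX K" and "closedin TX L"
  shows "(up_cl (topspace TX) RX K \<subseteq> up_cl (topspace TX) RX L \<longleftrightarrow>
            (\<forall>i\<in>I. up_cl (topspace (T i)) (R i) (f i ` K)
                    \<subseteq> up_cl (topspace (T i)) (R i) (f i ` L)))
       \<and> (down_cl (topspace TX) RX K \<subseteq> down_cl (topspace TX) RX L \<longleftrightarrow>
            (\<forall>i\<in>I. down_cl (topspace (T i)) (R i) (f i ` K)
                    \<subseteq> down_cl (topspace (T i)) (R i) (f i ` L)))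
       \<and> (em_le (topspace TX) RX (updown_cl (topspace TX) RX K) (updown_cl (topspace TX) RX L) \<longleftrightarrow>
            (\<forall>i\<in>I. em_le (topspace (T i)) (R i)
                      (updown_cl (topspace (T i)) (R i) (f i ` K))
                      (updown_cl (topspace (T i)) (R i) (f i ` L))))"
proof -
  note cof = assms(1) and diag = assms(2) and lim = assms(3)
  note cone = comp_ord_limit_cone_cone[OF lim]
  have KL: "K \<subseteq> topspace TX" "L \<subseteq> topspace TX"
    using assms(4,5) closedin_subset by auto
  have reflect: "\<forall>x\<in>topspace TX. \<forall>y\<in>topspace TX. (\<forall>i\<in>I. R i (f i x) (f i y)) \<longrightarrow> RX x y"
    using comp_ord_limit_cone_reflects_order[OF diag lim] by blast
  then have reflect_dual:
    "\<forall>x\<in>topspace TX. \<forall>y\<in>topspace TX. (\<forall>i\<in>I. (R i)\<inverse>\<inverse> (f i x) (f i y)) \<longrightarrow> RX\<inverse>\<inverse> x y"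
    unfolding conversep_iff by blast
  note up = up_cl_subset_iff_projections[OF cof diag cone reflect]
  note down = up_cl_subset_iff_projections[OF cof comp_ord_diagram_conversep[OF diag]
      comp_ord_cone_conversep[OF cone] reflect_dual, folded down_cl_eq_up_cl_conversep]
  have em_proj: "em_le (topspace (T i)) (R i) (updown_cl (topspace (T i)) (R i) (f i ` K))
      (updown_cl (topspace (T i)) (R i) (f i ` L)) \<longleftrightarrow>
      up_cl (topspace (T i)) (R i) (f i ` L) \<subseteq> up_cl (topspace (T i)) (R i) (f i ` K) \<and>
      down_cl (topspace (T i)) (R i) (f i ` K) \<subseteq> down_cl (topspace (T i)) (R i) (f i ` L)"
    if i: "i \<in> I" for i
  proof -
    have "f i ` K \<subseteq> topspace (T i)" "f i ` L \<subseteq> topspace (T i)"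
      using comp_ord_cone_in_topspace[OF cone i] KL by blast+
    then show ?thesis
      by (rule em_le_updown_cl_iff[OF _ _ comp_ord_diagram_comp_ord[OF diag i]])
  qed
  show ?thesis
    unfolding em_le_updown_cl_iff[OF KL comp_ord_cone_comp_ord[OF cone]]
      up[OF KL(1) assms(5)] up[OF KL(2) assms(4)] down[OF KL(1) assms(5)]
    using em_proj by (simp add: ball_conj_distrib)
qed

end
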